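(* Let $H$ be a complex Hilbert space with inner product $\langle\cdot,\cdot\rangle$ and norm $|\cdot|$, and let $-A$ be the generator of a uniformly bounded holomorphic semigroup $e^{-tA}$ in $H$. Assume $\nu(A)\subset\{z\in\mathbb{C}:\operatorname{Re}z>0\}$ and that $A$ has an accretive square, i.e. $\nu(A^2)\subset\{z\in\mathbb{C}:\operatorname{Re}z\ge0\}$. Then for every $u_0\neq0$ the height function $h(t)=|e^{-tA}u_0|$ is strictly convex and strictly decreasing on $[0,\infty[$, with $h''(t)>0$ for all $t>0$, and $h$ is differentiable from the right at $t=0$ with derivative in $[-\infty,0]$ satisfying $h'(0)=\inf_{t>0}h'(t)\le -m(A)$ when $|u_0|=1$. If $u_0\in D(A)$ with $|u_0|=1$, then $h'(0)=-\operatorname{Re}\langle Au_0,u_0\rangle$ and $h\in C^1([0,\infty[,\mathbb{R})\cap C^\infty(]0,\infty[,\mathbb{R})$.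
   Context: A semigroup $e^{-tA}$ in $\mathbb{B}(H)$ is uniformly bounded if $\|e^{-tA}\|\le M$ for all $t\ge0$; it is holomorphic if it extends to a holomorphic family $e^{-zA}$ for $z$ in an open sector $\{z\in\mathbb{C}:|\arg z|<\delta\}$ for some $\delta>0$. For an operator $T$ in $H$, $\nu(T)=\{\langle Tx,x\rangle: x\in D(T),\ |x|=1\}$ is its numerical range, and $m(A)=\inf\operatorname{Re}\nu(A)$. *)

theory Defs
  imports "HOL-Analysis.Analysis"
begin

text \<open>A complex Hilbert space is modelled as a real Hilbert space (real inner product,
  complete) together with a complex structure: an isometric real-linear map imul
  (multiplication by the imaginary unit) with imul (imul x) = - x.  Complex scalar
  multiplication and the complex inner product (linear in the first argument) are
  recovered below.  The real inner product is the real part of the complex one, and the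
  norm is the Hilbert norm.\<close>

class complex_hilbert = real_inner + complete_space +
  fixes imul :: "'a \<Rightarrow> 'a"
  assumes imul_add: "imul (x + y) = imul x + imul y"
    and imul_scaleR: "imul (r *\<^sub>R x) = r *\<^sub>R imul x"
    and imul_imul: "imul (imul x) = - x"
    and inner_imul: "inner (imul x) (imul y) = inner x y"

definition cscale :: "complex \<Rightarrow> 'a::complex_hilbert \<Rightarrow> 'a" where
  "cscale c x = Re c *\<^sub>R x + Im c *\<^sub>R imul x"

definition cinner :: "'a::complex_hilbert \<Rightarrow> 'a \<Rightarrow> complex" where
  "cinner x y = Complex (inner x y) (inner x (imul y))"

definition bounded_clinear :: "('a::complex_hilbert \<Rightarrow> 'a) \<Rightarrow> bool" where
  "bounded_clinear L \<longleftrightarrow> bounded_linear L \<and> (\<forall>x. L (imul x) = imul (L x))"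

definition C0_semigroup :: "(real \<Rightarrow> 'a::complex_hilbert \<Rightarrow> 'a) \<Rightarrow> bool" where
  "C0_semigroup T \<longleftrightarrow>
     (\<forall>t\<ge>0. bounded_clinear (T t)) \<and> T 0 = id \<and>
     (\<forall>s\<ge>0. \<forall>t\<ge>0. T (s + t) = T s \<circ> T t) \<and>
     (\<forall>x. continuous_on {0..} (\<lambda>t. T t x))"

definition neg_generator :: "(real \<Rightarrow> 'a::complex_hilbert \<Rightarrow> 'a) \<Rightarrow> ('a \<Rightarrow> 'a) \<Rightarrow> 'a set \<Rightarrow> bool" where
  "neg_generator T A D \<longleftrightarrow>
     D = {x. \<exists>y. ((\<lambda>t. (1 / t) *\<^sub>R (T t x - x)) \<longlongrightarrow> y) (at_right 0)} \<and>
     (\<forall>x\<in>D. ((\<lambda>t. (1 / t) *\<^sub>R (T t x - x)) \<longlongrightarrow> - A x) (at_right 0))"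

definition uniformly_bounded_sg :: "(real \<Rightarrow> 'a::complex_hilbert \<Rightarrow> 'a) \<Rightarrow> bool" where
  "uniformly_bounded_sg T \<longleftrightarrow> (\<exists>M. \<forall>t\<ge>0. onorm (T t) \<le> M)"

definition sector :: "real \<Rightarrow> complex set" where
  "sector \<delta> = {z. z \<noteq> 0 \<and> \<bar>Arg z\<bar> < \<delta>}"

definition op_holomorphic_on :: "(complex \<Rightarrow> 'a::complex_hilbert \<Rightarrow> 'a) \<Rightarrow> complex set \<Rightarrow> bool" where
  "op_holomorphic_on F S \<longleftrightarrow>
     (\<forall>z\<in>S. \<exists>L. bounded_linear L \<and>
        ((\<lambda>w. onorm (\<lambda>x. cscale (inverse (w - z)) (F w x - F z x) - L x)) \<longlongrightarrow> 0) (at z))"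

definition holomorphic_sg :: "(real \<Rightarrow> 'a::complex_hilbert \<Rightarrow> 'a) \<Rightarrow> bool" where
  "holomorphic_sg T \<longleftrightarrow>
     (\<exists>\<delta>>0. \<exists>F. (\<forall>t>0. F (complex_of_real t) = T t) \<and>
        (\<forall>z\<in>sector \<delta>. bounded_clinear (F z)) \<and> op_holomorphic_on F (sector \<delta>))"

definition num_range :: "('a::complex_hilbert \<Rightarrow> 'a) \<Rightarrow> 'a set \<Rightarrow> complex set" where
  "num_range A D = {cinner (A x) x | x. x \<in> D \<and> norm x = 1}"

definition m_of :: "('a::complex_hilbert \<Rightarrow> 'a) \<Rightarrow> 'a set \<Rightarrow> real" where
  "m_of A D = Inf (Re ` num_range A D)"

definition dom_sq :: "('a \<Rightarrow> 'a) \<Rightarrow> 'a set \<Rightarrow> 'a set" where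
  "dom_sq A D = {x \<in> D. A x \<in> D}"

definition strict_convex_on :: "real set \<Rightarrow> (real \<Rightarrow> real) \<Rightarrow> bool" where
  "strict_convex_on S f \<longleftrightarrow>
     (\<forall>x\<in>S. \<forall>y\<in>S. x \<noteq> y \<longrightarrow> (\<forall>u. 0 < u \<and> u < 1 \<longrightarrow>
        f ((1 - u) * x + u * y) < (1 - u) * f x + u * f y))"

text \<open>C^1 on S (one-sided derivatives at boundary points of S, via at t within S).\<close>
definition C1_on :: "real set \<Rightarrow> (real \<Rightarrow> real) \<Rightarrow> bool" where
  "C1_on S f \<longleftrightarrow> (\<exists>f'. (\<forall>t\<in>S. (f has_real_derivative f' t) (at t within S)) \<and> continuous_on S f')"

definition Cinf_on :: "real set \<Rightarrow> (real \<Rightarrow> real) \<Rightarrow> bool" where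
  "Cinf_on S f \<longleftrightarrow> (\<exists>Df :: nat \<Rightarrow> real \<Rightarrow> real. (\<forall>t\<in>S. Df 0 t = f t) \<and>
     (\<forall>n. \<forall>t\<in>S. (Df n has_real_derivative Df (Suc n) t) (at t within S)))"

end

theory Submission
  imports Defs "HOL-Complex_Analysis.Complex_Analysis"
begin

text \<open>For \<open>t > 0\<close> holomorphy puts \<open>u = T t u0\<close> into the domain of every power of \<open>A\<close> and
  makes \<open>h\<close> smooth, with \<open>h' = - \<langle>A u, u\<rangle> / |u|\<close> and
  \<open>h'' = (\<langle>A\<^sup>2 u, u\<rangle> + |A u|\<^sup>2) / |u| - \<langle>A u, u\<rangle>\<^sup>2 / |u|\<^sup>3\<close> (real inner products).
  Accretivity of \<open>A\<^sup>2\<close>, Cauchy-Schwarz and strict accretivity of \<open>A\<close> give \<open>h'' > 0\<close> and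
  \<open>h' \<le> - m(A) h < 0\<close>; that \<open>u \<noteq> 0\<close> is backward uniqueness, i.e. analytic continuation
  along the sector.  Since \<open>h'\<close> increases, the mean value theorem makes the right difference
  quotient of \<open>h\<close> at \<open>0\<close> converge to \<open>inf h'\<close>.\<close>

section \<open>The complex structure\<close>

lemma inner_imul_left: "inner (imul x) y = - inner x (imul y)"
proof -
  have "inner (imul (imul x)) (imul y) = inner (imul x) y" by (rule inner_imul)
  then show ?thesis by (simp add: imul_imul)
qed

lemma norm_imul [simp]: "norm (imul x) = norm x"
  by (simp add: norm_eq_sqrt_inner inner_imul)

lemma bounded_linear_imul: "bounded_linear imul"
  by (rule bounded_linear_intro[where K=1]) (auto simp: imul_add imul_scaleR)

lemma bounded_linear_cscale: "bounded_linear (cscale c)"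
  unfolding cscale_def
  by (intro bounded_linear_add bounded_linear_scaleR_right bounded_linear_ident
      bounded_linear_compose[OF bounded_linear_scaleR_right bounded_linear_imul])

lemma cscale_of_real [simp]: "cscale (complex_of_real r) x = r *\<^sub>R x"
  by (simp add: cscale_def)

lemma Re_cinner [simp]: "Re (cinner x y) = inner x y"
  by (simp add: cinner_def)

lemma cinner_cscale_left: "cinner (cscale c x) y = c * cinner x y"
  by (simp add: cinner_def cscale_def complex_eq_iff inner_add_left inner_imul_left inner_imul
      imul_imul algebra_simps)

lemma cinner_diff_left: "cinner (x - x') y = cinner x y - cinner x' y"
  by (simp add: cinner_def complex_eq_iff inner_diff_left)

lemma tendsto_cinner_left:
  "(f \<longlongrightarrow> a) F \<Longrightarrow> ((\<lambda>x. cinner (f x) y) \<longlongrightarrow> cinner a y) F"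
  unfolding cinner_def by (intro tendsto_Complex tendsto_inner tendsto_const)

section \<open>Derivatives of real and vector functions\<close>

lemma has_vector_derivative_iff_tendsto_quotient:
  "(f has_vector_derivative f') (at x within S) \<longleftrightarrow>
   ((\<lambda>y. (1 / (y - x)) *\<^sub>R (f y - f x)) \<longlongrightarrow> f') (at x within S)"
proof -
  have "\<forall>\<^sub>F y in at x within S. norm (f y - f x - (y - x) *\<^sub>R f') / norm (y - x)
          = norm ((1 / (y - x)) *\<^sub>R (f y - f x) - f')"
  proof (rule eventually_mono[OF eventually_neq_at_within[of x x S]])
    fix y :: real assume "y \<noteq> x"
    then have "(1 / (y - x)) *\<^sub>R (f y - f x) - f' = (1 / (y - x)) *\<^sub>R (f y - f x - (y - x) *\<^sub>R f')"
      by (simp add: scaleR_diff_right)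
    then show "norm (f y - f x - (y - x) *\<^sub>R f') / norm (y - x) = norm ((1 / (y - x)) *\<^sub>R (f y - f x) - f')"
      by (simp add: divide_inverse mult.commute)
  qed
  then have "(f has_vector_derivative f') (at x within S) \<longleftrightarrow>
      ((\<lambda>y. norm ((1 / (y - x)) *\<^sub>R (f y - f x) - f')) \<longlongrightarrow> 0) (at x within S)"
    unfolding has_vector_derivative_def has_derivative_iff_norm
    by (simp add: bounded_linear_scaleR_left tendsto_cong)
  then show ?thesis
    by (simp add: tendsto_norm_zero_iff LIM_zero_iff)
qed

lemma has_vector_derivative_tendsto_right_quotient:
  assumes "(f has_vector_derivative f') (at x)"
  shows "((\<lambda>h. (1 / h) *\<^sub>R (f (x + h) - f x)) \<longlongrightarrow> f') (at_right 0)"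
proof -
  have "((\<lambda>y. (1 / (y - x)) *\<^sub>R (f y - f x)) \<longlongrightarrow> f') (at_right x)"
    using assms unfolding has_vector_derivative_iff_tendsto_quotient
    by (rule tendsto_within_subset) simp
  then show ?thesis
    unfolding filterlim_at_right_to_0[of _ _ x] by (simp add: add.commute)
qed

lemma has_vector_derivative_norm:
  fixes f :: "real \<Rightarrow> 'a::real_inner"
  assumes "(f has_vector_derivative f') (at t within S)" and "f t \<noteq> 0"
  shows "((\<lambda>s. norm (f s)) has_real_derivative inner (f t) f' / norm (f t)) (at t within S)"
proof -
  have "((\<lambda>s. norm (f s)) has_derivative (\<lambda>h. inner (h *\<^sub>R f') (sgn (f t)))) (at t within S)"
    by (rule has_derivative_compose[OF assms(1)[unfolded has_vector_derivative_def]
          has_derivative_norm[OF assms(2)]])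
  then show ?thesis
    unfolding has_field_derivative_def
    by (rule has_derivative_eq_rhs) (auto simp: sgn_div_norm inner_commute divide_inverse fun_eq_iff)
qed

lemma strict_antimono_on_if_deriv_neg:
  fixes f f' :: "real \<Rightarrow> real"
  assumes "continuous_on {0..} f"
    and "\<And>t. 0 < t \<Longrightarrow> (f has_real_derivative f' t) (at t)" and "\<And>t. 0 < t \<Longrightarrow> f' t < 0"
  shows "strict_antimono_on {0..} f"
proof (rule monotone_onI)
  fix a b :: real assume "a \<in> {0..}" "b \<in> {0..}" "a < b"
  show "f b < f a"
  proof (rule DERIV_neg_imp_decreasing_open[OF \<open>a < b\<close>])
    fix x assume "a < x" "x < b"
    with \<open>a \<in> {0..}\<close> have "0 < x" by simp
    then show "\<exists>y. (f has_real_derivative y) (at x) \<and> y < 0" using assms(2,3) by blast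
  next
    show "continuous_on {a..b} f"
      using assms(1) \<open>a \<in> {0..}\<close> by (auto intro: continuous_on_subset)
  qed
qed

lemma MVT_open:
  fixes f f' :: "real \<Rightarrow> real"
  assumes "a < b" and "continuous_on {a..b} f"
    and "\<And>t. a < t \<Longrightarrow> t < b \<Longrightarrow> (f has_real_derivative f' t) (at t)"
  obtains z where "a < z" "z < b" "f b - f a = (b - a) * f' z"
proof -
  obtain z where "a < z" "z < b" "f b - f a = f' z * (b - a)"
    by (rule mvt[OF assms(1,2), of "\<lambda>t. (*) (f' t)"])
      (use assms(3) in \<open>auto simp: has_field_derivative_def\<close>)
  then show ?thesis using that by (simp add: mult.commute)
qed

lemma strict_convex_on_if_deriv_strict_mono:
  fixes f f' :: "real \<Rightarrow> real"
  assumes cont: "continuous_on {0..} f"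
    and deriv: "\<And>t. 0 < t \<Longrightarrow> (f has_real_derivative f' t) (at t)"
    and mono: "\<And>s t. 0 < s \<Longrightarrow> s < t \<Longrightarrow> f' s < f' t"
  shows "strict_convex_on {0..} f"
proof -
  have less: "f ((1 - u) * x + u * y) < (1 - u) * f x + u * f y"
    if "0 \<le> x" "x < y" "0 < u" "u < 1" for x y u :: real
  proof -
    define z where "z = (1 - u) * x + u * y"
    have zx: "z - x = u * (y - x)" and yz: "y - z = (1 - u) * (y - x)"
      by (simp_all add: z_def algebra_simps)
    then have "x < z" "z < y" using that by (smt (verit) mult_pos_pos)+
    obtain z1 where z1: "x < z1" "z1 < z" "f z - f x = (z - x) * f' z1"
      by (rule MVT_open[OF \<open>x < z\<close>, of f f'])
        (use cont deriv \<open>0 \<le> x\<close> in \<open>auto intro: continuous_on_subset\<close>)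
    obtain z2 where z2: "z < z2" "z2 < y" "f y - f z = (y - z) * f' z2"
      by (rule MVT_open[OF \<open>z < y\<close>, of f f'])
        (use cont deriv \<open>0 \<le> x\<close> \<open>x < z\<close> in \<open>auto intro: continuous_on_subset\<close>)
    have "(1 - u) * (f z - f x) = (1 - u) * u * (y - x) * f' z1" using z1(3) zx by simp
    also have "\<dots> < (1 - u) * u * (y - x) * f' z2"
      using mono[of z1 z2] z1 z2 that by simp
    also have "\<dots> = u * (f y - f z)" using z2(3) yz by simp
    finally show ?thesis by (simp add: z_def algebra_simps)
  qed
  show ?thesis
    unfolding strict_convex_on_def
  proof (intro ballI impI allI)
    fix x y u :: real assume "x \<in> {0..}" "y \<in> {0..}" "x \<noteq> y" "0 < u \<and> u < 1"
    then consider "x < y" | "y < x" by linarith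
    then show "f ((1 - u) * x + u * y) < (1 - u) * f x + u * f y"
    proof cases
      case 1 then show ?thesis using less[of x y u] \<open>x \<in> {0..}\<close> \<open>0 < u \<and> u < 1\<close> by simp
    next
      case 2 then show ?thesis using less[of y x "1 - u"] \<open>y \<in> {0..}\<close> \<open>0 < u \<and> u < 1\<close>
        by (simp add: algebra_simps)
    qed
  qed
qed

lemma right_quotient_tendsto_INF_deriv:
  fixes f f' :: "real \<Rightarrow> real"
  assumes cont: "continuous_on {0..} f"
    and deriv: "\<And>t. 0 < t \<Longrightarrow> (f has_real_derivative f' t) (at t)"
    and mono: "\<And>s t. 0 < s \<Longrightarrow> s < t \<Longrightarrow> f' s < f' t"
  shows "((\<lambda>s. ereal ((f s - f 0) / s)) \<longlongrightarrow> (INF t\<in>{0<..}. ereal (f' t))) (at_right 0)"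
proof -
  define d where "d = (INF t\<in>{0<..}. ereal (f' t))"
  have lower: "d \<le> ereal (f' t)" if "0 < t" for t
    unfolding d_def using that by (intro INF_lower) auto
  have deriv_tendsto: "((\<lambda>t. ereal (f' t)) \<longlongrightarrow> d) (at_right 0)"
  proof (rule order_tendstoI)
    fix a assume "a < d"
    then show "\<forall>\<^sub>F t in at_right 0. a < ereal (f' t)"
      using lower by (auto intro: eventually_at_right_less[THEN eventually_mono] less_le_trans)
  next
    fix a assume "d < a"
    then obtain t0 where "0 < t0" "ereal (f' t0) < a"
      unfolding d_def INF_less_iff by auto
    then show "\<forall>\<^sub>F t in at_right 0. ereal (f' t) < a"
      unfolding eventually_at_right_field using mono
      by (intro exI[of _ t0]) (auto intro: less_trans[rotated])
  qed
  have "\<forall>\<^sub>F s in at_right 0. d \<le> ereal ((f s - f 0) / s) \<and> ereal ((f s - f 0) / s) \<le> ereal (f' s)"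
  proof (rule eventually_mono[OF eventually_at_right_less])
    fix s :: real assume "0 < s"
    obtain z where "0 < z" "z < s" "f s - f 0 = (s - 0) * f' z"
      by (rule MVT_open[OF \<open>0 < s\<close>, of f f']) (use cont deriv in \<open>auto intro: continuous_on_subset\<close>)
    with \<open>0 < s\<close> show "d \<le> ereal ((f s - f 0) / s) \<and> ereal ((f s - f 0) / s) \<le> ereal (f' s)"
      using lower[of z] mono[of z s] by simp
  qed
  then show ?thesis
    unfolding d_def[symmetric]
    by (intro tendsto_sandwich[OF _ _ tendsto_const deriv_tendsto]) (auto elim: eventually_mono)
qed

lemma Cinf_on_if_derivatives_in:
  assumes "P g" and "\<And>t. t \<in> U \<Longrightarrow> g t = f t"
    and closed: "\<And>g. P g \<Longrightarrow> \<exists>g'. P g' \<and> (\<forall>t\<in>U. (g has_real_derivative g' t) (at t within U))"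
  shows "Cinf_on U f"
proof -
  obtain der where der: "\<And>g. P g \<Longrightarrow> P (der g) \<and> (\<forall>t\<in>U. (g has_real_derivative der g t) (at t within U))"
    using closed by metis
  have "P ((der ^^ n) g)" for n
    by (induction n) (use \<open>P g\<close> der in auto)
  then show ?thesis
    unfolding Cinf_on_def using assms(2) der
    by (intro exI[of _ "\<lambda>n. (der ^^ n) g"]) auto
qed

text \<open>Think of \<open>G i j t\<close> as \<open>\<langle>A\<^sup>i u(t), A\<^sup>j u(t)\<rangle>\<close> along a solution of \<open>u' = - A u\<close>: these
  polynomials are closed under differentiation, and \<open>|u| = G 0 0 powr (1/2)\<close> is one of them.\<close>
inductive gram_polynomial :: "(nat \<Rightarrow> nat \<Rightarrow> real \<Rightarrow> real) \<Rightarrow> (real \<Rightarrow> real) \<Rightarrow> bool" for G where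
  entry: "gram_polynomial G (G i j)"
| powr: "gram_polynomial G (\<lambda>t. G 0 0 t powr r)"
| const: "gram_polynomial G (\<lambda>t. c)"
| add: "gram_polynomial G f \<Longrightarrow> gram_polynomial G g \<Longrightarrow> gram_polynomial G (\<lambda>t. f t + g t)"
| mult: "gram_polynomial G f \<Longrightarrow> gram_polynomial G g \<Longrightarrow> gram_polynomial G (\<lambda>t. f t * g t)"

lemma gram_polynomial_has_derivative:
  assumes entry_deriv: "\<And>i j t. t \<in> U \<Longrightarrow>
      (G i j has_real_derivative - (G (Suc i) j t + G i (Suc j) t)) (at t)"
    and pos: "\<And>t. t \<in> U \<Longrightarrow> 0 < G 0 0 t"
    and "gram_polynomial G f"
  shows "\<exists>f'. gram_polynomial G f' \<and> (\<forall>t\<in>U. (f has_real_derivative f' t) (at t))"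
  using \<open>gram_polynomial G f\<close>
proof induction
  case (entry i j)
  have "gram_polynomial G (\<lambda>t. - 1 * (G (Suc i) j t + G i (Suc j) t))"
    by (intro gram_polynomial.intros)
  moreover have "(G i j has_real_derivative - 1 * (G (Suc i) j t + G i (Suc j) t)) (at t)"
    if "t \<in> U" for t
    using entry_deriv[OF that] by simp
  ultimately show ?case by blast
next
  case (powr r)
  have "gram_polynomial G (\<lambda>t. r * G 0 0 t powr (r - 1) * (- 1 * (G 1 0 t + G 0 1 t)))"
    by (intro gram_polynomial.intros)
  moreover have "((\<lambda>t. G 0 0 t powr r) has_real_derivative
      r * G 0 0 t powr (r - 1) * (- 1 * (G 1 0 t + G 0 1 t))) (at t)" if "t \<in> U" for t
    using DERIV_fun_powr[OF entry_deriv[OF that] pos[OF that], of r] by simp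
  ultimately show ?case by blast
next
  case (const c)
  have "gram_polynomial G (\<lambda>t. 0)" by (rule gram_polynomial.const)
  then show ?case by auto
next
  case (add f g)
  then obtain f' g' where "gram_polynomial G f'" "gram_polynomial G g'"
    "\<forall>t\<in>U. (f has_real_derivative f' t) (at t)" "\<forall>t\<in>U. (g has_real_derivative g' t) (at t)"
    by blast
  then show ?case
    by (intro exI[of _ "\<lambda>t. f' t + g' t"]) (auto intro: gram_polynomial.add DERIV_add)
next
  case (mult f g)
  then obtain f' g' where "gram_polynomial G f'" "gram_polynomial G g'"
    "\<forall>t\<in>U. (f has_real_derivative f' t) (at t)" "\<forall>t\<in>U. (g has_real_derivative g' t) (at t)"
    by blast
  with mult.hyps show ?case
    by (intro exI[of _ "\<lambda>t. f' t * g t + g' t * f t"])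
      (auto intro: gram_polynomial.add gram_polynomial.mult DERIV_mult)
qed

section \<open>Inner products and the numerical range\<close>

lemma Re_num_range_normalized:
  assumes "v \<noteq> 0" and "(1 / norm v) *\<^sub>R v \<in> E"
    and "B ((1 / norm v) *\<^sub>R v) = (1 / norm v) *\<^sub>R B v"
  shows "inner (B v) v / (norm v)\<^sup>2 \<in> Re ` num_range B E"
proof -
  have "norm ((1 / norm v) *\<^sub>R v) = 1" using assms(1) by simp
  then have "cinner (B ((1 / norm v) *\<^sub>R v)) ((1 / norm v) *\<^sub>R v) \<in> num_range B E"
    unfolding num_range_def using assms(2) by blast
  moreover have "Re (cinner (B ((1 / norm v) *\<^sub>R v)) ((1 / norm v) *\<^sub>R v)) = inner (B v) v / (norm v)\<^sup>2"
    using assms(3) by (simp add: power2_eq_square)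
  ultimately show ?thesis by (metis image_eqI)
qed

lemma Cauchy_Schwarz_defect:
  fixes a v :: "'a::real_inner"
  assumes "v \<noteq> 0"
  shows "(norm a)\<^sup>2 * (norm v)\<^sup>2 - (inner a v)\<^sup>2
    = (norm (a - (inner a v / (norm v)\<^sup>2) *\<^sub>R v))\<^sup>2 * (norm v)\<^sup>2"
  using assms unfolding power2_norm_eq_inner
  by (simp add: inner_diff_left inner_diff_right inner_commute[of v a] field_simps power2_eq_square)

section \<open>Holomorphic operator families\<close>

text \<open>The sector of half-angle \<open>arctan \<delta>\<close>, described without \<open>Arg\<close> so that it is visibly
  open and convex.\<close>
definition tan_sector :: "real \<Rightarrow> complex set" where
  "tan_sector \<delta> = {z. 0 < Re z \<and> \<bar>Im z\<bar> < \<delta> * Re z}"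

lemma tan_sector_subset_sector: "tan_sector \<delta> \<subseteq> sector \<delta>"
proof
  fix z assume "z \<in> tan_sector \<delta>"
  then have re: "0 < Re z" and im: "\<bar>Im z\<bar> < \<delta> * Re z" by (auto simp: tan_sector_def)
  have "\<bar>Arg z\<bar> = \<bar>arctan (Im z / Re z)\<bar>" using arg_conv_arctan[OF re] by simp
  also have "\<dots> \<le> \<bar>Im z\<bar> / Re z" using re abs_arctan_le[of "Im z / Re z"] by (simp add: abs_divide)
  also have "\<dots> < \<delta>" using re im by (simp add: divide_less_eq)
  finally show "z \<in> sector \<delta>" using re by (auto simp: sector_def)
qed

lemma tan_sector_eq_halfspaces:
  "tan_sector \<delta> = {z. Re z > 0} \<inter> {z. inner (Complex \<delta> (-1)) z > 0} \<inter> {z. inner (Complex \<delta> 1) z > 0}"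
  by (auto simp: tan_sector_def inner_complex_def abs_less_iff)

lemma open_tan_sector: "open (tan_sector \<delta>)"
  unfolding tan_sector_eq_halfspaces
  by (intro open_Int open_halfspace_Re_gt open_halfspace_gt)

lemma convex_tan_sector: "convex (tan_sector \<delta>)"
  unfolding tan_sector_eq_halfspaces
  by (intro convex_Int convex_halfspace_Re_gt convex_halfspace_gt)

lemma of_real_in_tan_sector: "0 < \<delta> \<Longrightarrow> 0 < t \<Longrightarrow> complex_of_real t \<in> tan_sector \<delta>"
  by (simp add: tan_sector_def)

lemma op_holomorphic_on_subset:
  "op_holomorphic_on F S \<Longrightarrow> S' \<subseteq> S \<Longrightarrow> op_holomorphic_on F S'"
  by (auto simp: op_holomorphic_on_def)

lemma op_holomorphic_on_tendsto_quotient: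
  assumes hol: "op_holomorphic_on F S" and "open S"
    and lin: "\<And>z. z \<in> S \<Longrightarrow> bounded_linear (F z)" and z: "z \<in> S"
  obtains L where "\<And>x. ((\<lambda>w. cscale (inverse (w - z)) (F w x - F z x)) \<longlongrightarrow> L x) (at z)"
proof -
  obtain L where "bounded_linear L" and
    lim: "((\<lambda>w. onorm (\<lambda>x. cscale (inverse (w - z)) (F w x - F z x) - L x)) \<longlongrightarrow> 0) (at z)"
    using hol z unfolding op_holomorphic_on_def by blast
  define G where "G w = (\<lambda>x. cscale (inverse (w - z)) (F w x - F z x) - L x)" for w
  have "((\<lambda>w. G w x) \<longlongrightarrow> 0) (at z)" for x
  proof (rule Lim_null_comparison)
    have "\<forall>\<^sub>F w in at z. w \<in> S"
      using \<open>open S\<close> z by (simp add: eventually_at_topological) blast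
    then show "\<forall>\<^sub>F w in at z. norm (G w x) \<le> onorm (G w) * norm x"
    proof (rule eventually_mono)
      fix w assume "w \<in> S"
      then have "bounded_linear (G w)"
        unfolding G_def using lin z \<open>bounded_linear L\<close>
        by (intro bounded_linear_sub bounded_linear_compose[OF bounded_linear_cscale]) auto
      then show "norm (G w x) \<le> onorm (G w) * norm x" by (rule onorm)
    qed
    show "((\<lambda>w. onorm (G w) * norm x) \<longlongrightarrow> 0) (at z)"
      using tendsto_mult_left_zero[OF lim] unfolding G_def .
  qed
  then show ?thesis
    using that[of L] by (simp add: G_def LIM_zero_iff)
qed

lemma op_holomorphic_on_imp_holomorphic_cinner:
  assumes hol: "op_holomorphic_on F S" and "open S"
    and lin: "\<And>z. z \<in> S \<Longrightarrow> bounded_linear (F z)"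
  shows "(\<lambda>z. cinner (F z x) y) holomorphic_on S"
  unfolding holomorphic_on_open[OF \<open>open S\<close>]
proof
  fix z assume z: "z \<in> S"
  obtain L where "((\<lambda>w. cscale (inverse (w - z)) (F w x - F z x)) \<longlongrightarrow> L x) (at z)"
    using op_holomorphic_on_tendsto_quotient[OF hol \<open>open S\<close> lin z] by metis
  from tendsto_cinner_left[OF this, of y]
  have "((\<lambda>w. (cinner (F w x) y - cinner (F z x) y) / (w - z)) \<longlongrightarrow> cinner (L x) y) (at z)"
    by (simp add: cinner_cscale_left cinner_diff_left divide_inverse mult.commute)
  then show "\<exists>d. ((\<lambda>w. cinner (F w x) y) has_field_derivative d) (at z)"
    by (auto simp: has_field_derivative_iff)
qed

lemma op_holomorphic_on_real_differentiable:
  assumes hol: "op_holomorphic_on F S" and "open S"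
    and lin: "\<And>z. z \<in> S \<Longrightarrow> bounded_linear (F z)" and t: "complex_of_real t \<in> S"
  shows "\<exists>v. ((\<lambda>s. F (complex_of_real s) x) has_vector_derivative v) (at t)"
proof -
  obtain L where lim: "((\<lambda>w. cscale (inverse (w - t)) (F w x - F t x)) \<longlongrightarrow> L x) (at (complex_of_real t))"
    using op_holomorphic_on_tendsto_quotient[OF hol \<open>open S\<close> lin t] by metis
  have "filterlim complex_of_real (at (complex_of_real t)) (at t)"
    by (intro filterlim_atI tendsto_intros) (simp add: eventually_neq_at_within)
  note lim_real = filterlim_compose[OF lim this]
  have eq: "cscale (inverse (complex_of_real s - complex_of_real t)) v = (1 / (s - t)) *\<^sub>R v"
    for s v by (metis cscale_of_real inverse_eq_divide of_real_diff of_real_inverse)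
  have "((\<lambda>s. (1 / (s - t)) *\<^sub>R (F s x - F t x)) \<longlongrightarrow> L x) (at t)"
    using lim_real unfolding eq .
  then show ?thesis
    by (auto simp: has_vector_derivative_iff_tendsto_quotient)
qed

section \<open>Semigroups and generators\<close>

locale C0_generator =
  fixes T :: "real \<Rightarrow> 'a::complex_hilbert \<Rightarrow> 'a" and A :: "'a \<Rightarrow> 'a" and D :: "'a set"
  assumes C0: "C0_semigroup T" and generator: "neg_generator T A D"
begin

lemma bounded_linear_T: "0 \<le> t \<Longrightarrow> bounded_linear (T t)"
  using C0 by (auto simp: C0_semigroup_def bounded_clinear_def)

lemma T_0 [simp]: "T 0 x = x"
  using C0 by (auto simp: C0_semigroup_def)

lemma T_add: "0 \<le> s \<Longrightarrow> 0 \<le> t \<Longrightarrow> T (s + t) x = T s (T t x)"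
  using C0 unfolding C0_semigroup_def by (metis comp_apply)

lemma continuous_on_T: "continuous_on {0..} (\<lambda>t. T t x)"
  using C0 by (auto simp: C0_semigroup_def)

lemma T_diff: "0 \<le> t \<Longrightarrow> T t (x - y) = T t x - T t y"
  using bounded_linear_T by (simp add: linear_diff bounded_linear.linear)

lemma T_scaleR: "0 \<le> t \<Longrightarrow> T t (c *\<^sub>R x) = c *\<^sub>R T t x"
  using bounded_linear_T by (simp add: linear_scale bounded_linear.linear)

lemma T_tendsto_right: "((\<lambda>t. T t x) \<longlongrightarrow> x) (at_right 0)"
proof -
  have "((\<lambda>t. T t x) \<longlongrightarrow> T 0 x) (at 0 within {0..})"
    using continuous_on_T[of x, unfolded continuous_on_def, rule_format, of 0] by simp
  then show ?thesis by (simp add: at_within_Ici_at_right)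
qed

lemma generator_tendsto: "x \<in> D \<Longrightarrow> ((\<lambda>t. (1 / t) *\<^sub>R (T t x - x)) \<longlongrightarrow> - A x) (at_right 0)"
  using generator by (auto simp: neg_generator_def)

lemma generatorI:
  assumes "((\<lambda>t. (1 / t) *\<^sub>R (T t x - x)) \<longlongrightarrow> y) (at_right 0)"
  shows "x \<in> D" and "A x = - y"
proof -
  show "x \<in> D" using generator assms by (auto simp: neg_generator_def)
  from tendsto_unique[OF _ generator_tendsto[OF this] assms] show "A x = - y"
    by (metis minus_minus trivial_limit_at_right_real)
qed

lemma generator_transfer:
  assumes "x \<in> D"
    and "\<And>t. 0 < t \<Longrightarrow> (1 / t) *\<^sub>R (T t x' - x') = L ((1 / t) *\<^sub>R (T t x - x))"
    and "bounded_linear L"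
  shows "x' \<in> D" and "A x' = L (A x)"
proof -
  have "((\<lambda>t. L ((1 / t) *\<^sub>R (T t x - x))) \<longlongrightarrow> L (- A x)) (at_right 0)"
    by (rule bounded_linear.tendsto[OF assms(3) generator_tendsto[OF assms(1)]])
  then have "((\<lambda>t. (1 / t) *\<^sub>R (T t x' - x')) \<longlongrightarrow> L (- A x)) (at_right 0)"
    by (rule tendsto_cong[THEN iffD1, rotated])
      (simp add: assms(2) eventually_at_right_less[THEN eventually_mono])
  then show "x' \<in> D" and "A x' = L (A x)"
    using generatorI linear_neg[OF bounded_linear.linear[OF assms(3)]] by simp_all
qed

lemma T_commute_A:
  assumes "x \<in> D" and "0 \<le> s"
  shows "T s x \<in> D" and "A (T s x) = T s (A x)"
proof -
  have "(1 / t) *\<^sub>R (T t (T s x) - T s x) = T s ((1 / t) *\<^sub>R (T t x - x))" if "0 < t" for t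
    using T_add[of t s x] T_add[of s t x] assms(2) that by (simp add: add.commute T_scaleR T_diff)
  from generator_transfer[OF assms(1) this bounded_linear_T[OF assms(2)]]
  show "T s x \<in> D" and "A (T s x) = T s (A x)" by simp_all
qed

lemma A_scaleR:
  assumes "x \<in> D"
  shows "c *\<^sub>R x \<in> D" and "A (c *\<^sub>R x) = c *\<^sub>R A x"
proof -
  have "(1 / t) *\<^sub>R (T t (c *\<^sub>R x) - c *\<^sub>R x) = c *\<^sub>R ((1 / t) *\<^sub>R (T t x - x))" if "0 < t" for t
    using that by (simp add: T_scaleR algebra_simps)
  from generator_transfer[OF assms this bounded_linear_scaleR_right]
  show "c *\<^sub>R x \<in> D" and "A (c *\<^sub>R x) = c *\<^sub>R A x" by simp_all
qed

end

locale holomorphic_C0_generator = C0_generator T A D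
  for T :: "real \<Rightarrow> 'a::complex_hilbert \<Rightarrow> 'a" and A D +
  fixes F :: "complex \<Rightarrow> 'a \<Rightarrow> 'a" and \<delta> :: real
  assumes \<delta>_pos: "0 < \<delta>"
    and F_extends_T: "\<And>t. 0 < t \<Longrightarrow> F (complex_of_real t) = T t"
    and bounded_clinear_F: "\<And>z. z \<in> sector \<delta> \<Longrightarrow> bounded_clinear (F z)"
    and op_holomorphic_F: "op_holomorphic_on F (sector \<delta>)"
begin

lemma op_holomorphic_F_tan_sector: "op_holomorphic_on F (tan_sector \<delta>)"
  using op_holomorphic_F tan_sector_subset_sector by (rule op_holomorphic_on_subset)

lemma bounded_linear_F_tan_sector: "z \<in> tan_sector \<delta> \<Longrightarrow> bounded_linear (F z)"
  using bounded_clinear_F tan_sector_subset_sector by (auto simp: bounded_clinear_def)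

lemma T_has_vector_derivative:
  assumes "0 < t"
  shows "((\<lambda>s. T s x) has_vector_derivative - A (T t x)) (at t)" and "T t x \<in> D"
proof -
  obtain v where "((\<lambda>s. F (complex_of_real s) x) has_vector_derivative v) (at t)"
    using op_holomorphic_on_real_differentiable[OF op_holomorphic_F_tan_sector open_tan_sector
        bounded_linear_F_tan_sector of_real_in_tan_sector[OF \<delta>_pos assms]] by blast
  then have deriv: "((\<lambda>s. T s x) has_vector_derivative v) (at t)"
    by (rule has_vector_derivative_transform_within_open[of _ _ _ "{0<..}"])
      (use assms F_extends_T in auto)
  have "((\<lambda>h. (1 / h) *\<^sub>R (T h (T t x) - T t x)) \<longlongrightarrow> v) (at_right 0)"
  proof (rule tendsto_cong[THEN iffD1, OF _ has_vector_derivative_tendsto_right_quotient[OF deriv]])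
    show "\<forall>\<^sub>F h in at_right 0. (1 / h) *\<^sub>R (T (t + h) x - T t x) = (1 / h) *\<^sub>R (T h (T t x) - T t x)"
      using assms by (auto intro: eventually_at_right_less[THEN eventually_mono]
          simp: T_add[symmetric] add.commute)
  qed
  from generatorI[OF this] deriv
  show "((\<lambda>s. T s x) has_vector_derivative - A (T t x)) (at t)" and "T t x \<in> D" by simp_all
qed

text \<open>In the inductive step \<open>A (A\<^sup>n (T t x)) = T (t/2) (A (A\<^sup>n (T (t/2) x)))\<close> lies in
  the range of \<open>T (t/2)\<close>, which is contained in \<open>D\<close>.\<close>
lemma A_iterate_T:
  assumes "0 < t" and "0 \<le> s"
  shows "(A ^^ n) (T t x) \<in> D \<and> (A ^^ n) (T (s + t) x) = T s ((A ^^ n) (T t x))"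
  using assms
proof (induction n arbitrary: s t)
  case 0
  then show ?case using T_add[of s t x] T_has_vector_derivative(2)[of t x] by simp
next
  case (Suc n)
  define y where "y = (A ^^ n) (T t x)"
  define y' where "y' = (A ^^ n) (T (t/2) x)"
  have "y \<in> D" and shift: "(A ^^ n) (T (s + t) x) = T s y"
    using Suc by (simp_all add: y_def)
  have "y' \<in> D" and "y = T (t/2) y'"
    using Suc.IH[of "t/2" "t/2"] Suc.prems by (simp_all add: y_def y'_def)
  then have "A y = T (t/2) (A y')" using T_commute_A(2)[of y' "t/2"] Suc.prems by simp
  then have "A y \<in> D" using T_has_vector_derivative(2)[of "t/2" "A y'"] Suc.prems by simp
  then show ?case
    using shift T_commute_A(2)[OF \<open>y \<in> D\<close> Suc.prems(2)] by (simp add: y_def)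
qed

lemma A_iterate_T_has_vector_derivative:
  assumes "0 < t"
  shows "((\<lambda>r. (A ^^ n) (T r x)) has_vector_derivative - (A ^^ Suc n) (T t x)) (at t)"
proof -
  define y where "y = (A ^^ n) (T (t/2) x)"
  have "((\<lambda>r. r - t/2) has_vector_derivative 1) (at t)"
    by (auto intro!: derivative_eq_intros)
  moreover have "((\<lambda>s. T s y) has_vector_derivative - A (T (t/2) y)) (at (t - t/2))"
    using T_has_vector_derivative(1)[of "t/2" y] assms by simp
  moreover have "T (t/2) y = (A ^^ n) (T t x)"
    using A_iterate_T[of "t/2" "t/2" n x] assms by (simp add: y_def)
  ultimately have "(((\<lambda>s. T s y) \<circ> (\<lambda>r. r - t/2)) has_vector_derivative - (A ^^ Suc n) (T t x)) (at t)"
    using vector_diff_chain_at by fastforce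
  then show ?thesis
  proof (rule has_vector_derivative_transform_within_open[of _ _ _ "{t/2<..}"])
    fix r assume "r \<in> {t/2<..}"
    then show "((\<lambda>s. T s y) \<circ> (\<lambda>r. r - t/2)) r = (A ^^ n) (T r x)"
      using A_iterate_T[of "t/2" "r - t/2" n x] assms by (simp add: y_def)
  qed (use assms in auto)
qed

text \<open>Backward uniqueness: \<open>z \<mapsto> \<langle>F z x, T s x\<rangle>\<close> is holomorphic on a connected open set
  and vanishes on the ray beyond \<open>t\<close>, hence also at \<open>s\<close>.\<close>
lemma T_eq_0_iff:
  assumes "0 \<le> t"
  shows "T t x = 0 \<longleftrightarrow> x = 0"
proof
  assume "T t x = 0"
  have vanish_beyond: "T r x = 0" if "t < r" for r
    using T_add[of "r - t" t x] T_scaleR[of "r - t" 0 0] \<open>T t x = 0\<close> assms that by simp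
  have vanish: "T s x = 0" if "0 < s" for s
  proof -
    have "cinner (F (complex_of_real s) x) (T s x) = 0"
    proof (rule analytic_continuation[of "\<lambda>z. cinner (F z x) (T s x)" "tan_sector \<delta>"
          "complex_of_real ` {t+1<..}" "complex_of_real (t + 1)" "complex_of_real s"])
      show "(\<lambda>z. cinner (F z x) (T s x)) holomorphic_on tan_sector \<delta>"
        by (rule op_holomorphic_on_imp_holomorphic_cinner[OF op_holomorphic_F_tan_sector
              open_tan_sector bounded_linear_F_tan_sector])
      show "connected (tan_sector \<delta>)"
        by (rule convex_connected[OF convex_tan_sector])
      show "complex_of_real (t + 1) islimpt complex_of_real ` {t+1<..}"
      proof (rule islimpt_isCont_image)
        show "t + 1 islimpt {t+1<..}"
          by (rule islimpt_subset[OF islimpt_greaterThanLessThan1[of "t+1" "t+2"]]) auto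
        show "\<forall>\<^sub>F r in at (t + 1). complex_of_real r \<noteq> complex_of_real (t + 1)"
          using eventually_neq_at_within[of "t+1" "t+1" UNIV]
          by (rule eventually_mono) (metis of_real_eq_iff)
      qed (intro continuous_intros)
      show "cinner (F z x) (T s x) = 0" if "z \<in> complex_of_real ` {t+1<..}" for z
        using that assms vanish_beyond F_extends_T by (auto simp: cinner_def complex_eq_iff)
    qed (use open_tan_sector assms that \<delta>_pos in \<open>auto simp: tan_sector_def\<close>)
    then show ?thesis using F_extends_T[OF that] Re_cinner[of "T s x" "T s x"] by simp
  qed
  have "((\<lambda>s. T s x) \<longlongrightarrow> 0) (at_right 0)"
    by (rule tendsto_eventually) (auto intro: eventually_at_right_less[THEN eventually_mono] vanish)
  then show "x = 0"
    using T_tendsto_right tendsto_unique[of "at_right (0::real)"] by auto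
qed (use T_scaleR[of t 0 0] assms in simp)

lemma T_has_vector_derivative_within:
  assumes "x \<in> D" and "0 \<le> t"
  shows "((\<lambda>s. T s x) has_vector_derivative - T t (A x)) (at t within {0..})"
proof (cases "t = 0")
  case True
  then show ?thesis
    using generator_tendsto[OF assms(1)]
    by (simp add: has_vector_derivative_iff_tendsto_quotient at_within_Ici_at_right)
next
  case False
  with assms have "0 < t" by simp
  then show ?thesis
    using T_has_vector_derivative(1)[OF \<open>0 < t\<close>, of x] T_commute_A(2)[OF assms]
    by (simp add: has_vector_derivative_at_within)
qed

end

section \<open>The height function\<close>

locale height_function = holomorphic_C0_generator T A D F \<delta>
  for T :: "real \<Rightarrow> 'a::complex_hilbert \<Rightarrow> 'a" and A D F \<delta> +
  fixes u0 :: 'a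
  assumes accretive: "num_range A D \<subseteq> {z. Re z > 0}"
    and accretive_square: "num_range (A \<circ> A) (dom_sq A D) \<subseteq> {z. Re z \<ge> 0}"
    and u0_nonzero: "u0 \<noteq> 0"
begin

lemma inner_A_pos:
  assumes "v \<in> D" and "v \<noteq> 0"
  shows "0 < inner (A v) v"
proof -
  have "inner (A v) v / (norm v)\<^sup>2 \<in> Re ` num_range A D"
    using assms by (intro Re_num_range_normalized) (simp_all add: A_scaleR)
  then have "0 < inner (A v) v / (norm v)\<^sup>2" using accretive by auto
  then show ?thesis by (simp add: zero_less_divide_iff)
qed

lemma inner_A_ge_m:
  assumes "v \<in> D"
  shows "m_of A D * (norm v)\<^sup>2 \<le> inner (A v) v"
proof (cases "v = 0")
  case False
  have "bdd_below (Re ` num_range A D)"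
    using accretive by (intro bdd_belowI[of _ 0]) (auto intro: less_imp_le)
  then have "m_of A D \<le> inner (A v) v / (norm v)\<^sup>2"
    unfolding m_of_def
    using Re_num_range_normalized[of v D A] A_scaleR \<open>v \<in> D\<close> False by (intro cInf_lower) auto
  moreover have "0 < (norm v)\<^sup>2" using False by simp
  ultimately show ?thesis by (simp add: pos_le_divide_eq)
qed simp

lemma inner_A_square_nonneg:
  assumes "v \<in> D" and "A v \<in> D"
  shows "0 \<le> inner (A (A v)) v"
proof (cases "v = 0")
  case False
  with assms have "inner ((A \<circ> A) v) v / (norm v)\<^sup>2 \<in> Re ` num_range (A \<circ> A) (dom_sq A D)"
    by (intro Re_num_range_normalized) (auto simp: dom_sq_def A_scaleR)
  then have "0 \<le> inner (A (A v)) v / (norm v)\<^sup>2" using accretive_square by auto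
  then show ?thesis using False by (simp add: zero_le_divide_iff)
qed simp

definition gram :: "nat \<Rightarrow> nat \<Rightarrow> real \<Rightarrow> real" where
  "gram i j t = inner ((A ^^ i) (T t u0)) ((A ^^ j) (T t u0))"

definition height :: "real \<Rightarrow> real" where
  "height t = norm (T t u0)"

definition height_deriv :: "real \<Rightarrow> real" where
  "height_deriv t = - gram 1 0 t / height t"

definition height_deriv2 :: "real \<Rightarrow> real" where
  "height_deriv2 t = (gram 2 0 t + gram 1 1 t) / height t - (gram 1 0 t)\<^sup>2 / height t ^ 3"

lemma T_u0_nonzero: "0 \<le> t \<Longrightarrow> T t u0 \<noteq> 0"
  using T_eq_0_iff u0_nonzero by blast

lemma height_pos: "0 \<le> t \<Longrightarrow> 0 < height t"
  using T_u0_nonzero by (simp add: height_def)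

lemma gram_0_0_pos: "0 \<le> t \<Longrightarrow> 0 < gram 0 0 t"
  using T_u0_nonzero by (simp add: gram_def)

lemma continuous_on_height: "continuous_on {0..} height"
  unfolding height_def[abs_def] by (intro continuous_on_norm continuous_on_T)

lemma gram_has_real_derivative:
  assumes "0 < t"
  shows "(gram i j has_real_derivative - (gram (Suc i) j t + gram i (Suc j) t)) (at t)"
  using bounded_bilinear.has_vector_derivative[OF bounded_bilinear_inner
      A_iterate_T_has_vector_derivative[OF assms] A_iterate_T_has_vector_derivative[OF assms]]
  unfolding has_real_derivative_iff_has_vector_derivative gram_def[abs_def]
  by (simp add: algebra_simps)

lemma height_has_real_derivative:
  assumes "0 < t"
  shows "(height has_real_derivative height_deriv t) (at t)"
  using has_vector_derivative_norm[OF T_has_vector_derivative(1)[OF assms] T_u0_nonzero] assms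
  by (simp add: height_def[abs_def] height_deriv_def gram_def inner_commute)

lemma height_deriv_has_real_derivative:
  assumes "0 < t"
  shows "(height_deriv has_real_derivative height_deriv2 t) (at t)"
proof -
  have "((\<lambda>t. - gram 1 0 t) has_real_derivative gram 2 0 t + gram 1 1 t) (at t)"
    using DERIV_minus[OF gram_has_real_derivative[OF assms, of 1 0]]
    by (simp add: numeral_2_eq_2 add.commute)
  then have "((\<lambda>t. - gram 1 0 t / height t) has_real_derivative
      ((gram 2 0 t + gram 1 1 t) * height t - (- gram 1 0 t) * height_deriv t) / (height t * height t)) (at t)"
    using height_pos[of t] assms by (intro DERIV_divide height_has_real_derivative) auto
  moreover have "((gram 2 0 t + gram 1 1 t) * height t - (- gram 1 0 t) * height_deriv t)
      / (height t * height t) = height_deriv2 t"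
    using height_pos[of t] assms
    by (simp add: height_deriv_def height_deriv2_def field_simps power2_eq_square power3_eq_cube)
  moreover have "height_deriv = (\<lambda>t. - gram 1 0 t / height t)"
    by (simp add: fun_eq_iff height_deriv_def)
  ultimately show ?thesis by simp
qed

lemma height_deriv_neg: "0 < t \<Longrightarrow> height_deriv t < 0"
  using inner_A_pos[OF T_has_vector_derivative(2) T_u0_nonzero] height_pos[of t]
  by (simp add: height_deriv_def gram_def)

lemma height_deriv_le_m: "0 < t \<Longrightarrow> height_deriv t \<le> - m_of A D * height t"
  using inner_A_ge_m[OF T_has_vector_derivative(2), of t u0] height_pos[of t]
  by (simp add: height_deriv_def gram_def height_def power2_eq_square divide_simps)

text \<open>With \<open>u = T t u0\<close> and \<open>p\<close> the component of \<open>A u\<close> orthogonal to \<open>u\<close>, the second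
  derivative is \<open>(\<langle>A\<^sup>2u, u\<rangle> + |p|\<^sup>2) / |u|\<close>; if \<open>p = 0\<close> then \<open>u\<close> is an eigenvector of \<open>A\<close>
  with positive eigenvalue, so that \<open>\<langle>A\<^sup>2u, u\<rangle> > 0\<close>.\<close>
lemma height_deriv2_pos:
  assumes "0 < t"
  shows "0 < height_deriv2 t"
proof -
  define v where "v = T t u0"
  define a where "a = A v"
  define c where "c = inner a v / (norm v)\<^sup>2"
  define p where "p = a - c *\<^sub>R v"
  have "v \<in> D" "a \<in> D" "v \<noteq> 0"
    using T_has_vector_derivative(2)[OF assms] A_iterate_T[OF assms order_refl, of 1 u0]
      T_u0_nonzero assms by (simp_all add: v_def a_def)
  have defect: "(norm a)\<^sup>2 * (norm v)\<^sup>2 - (inner a v)\<^sup>2 = (norm p)\<^sup>2 * (norm v)\<^sup>2"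
    unfolding p_def c_def by (rule Cauchy_Schwarz_defect[OF \<open>v \<noteq> 0\<close>])
  have "height_deriv2 t = (inner (A a) v + (norm a)\<^sup>2) / norm v - (inner a v)\<^sup>2 / norm v ^ 3"
    by (simp add: height_deriv2_def gram_def height_def v_def a_def numeral_2_eq_2 dot_square_norm)
  also have "\<dots> = ((inner (A a) v + (norm a)\<^sup>2) * (norm v)\<^sup>2 - (inner a v)\<^sup>2) / norm v ^ 3"
    using \<open>v \<noteq> 0\<close> by (simp add: field_simps power2_eq_square power3_eq_cube)
  also have "\<dots> = (inner (A a) v + (norm p)\<^sup>2) * (norm v)\<^sup>2 / norm v ^ 3"
    using defect by (simp add: algebra_simps)
  also have "\<dots> = (inner (A a) v + (norm p)\<^sup>2) / norm v"
    using \<open>v \<noteq> 0\<close> by (simp add: power2_eq_square power3_eq_cube)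
  finally have formula: "height_deriv2 t = (inner (A a) v + (norm p)\<^sup>2) / norm v" .
  have "0 < inner (A a) v + (norm p)\<^sup>2"
  proof (cases "p = 0")
    case True
    then have "a = c *\<^sub>R v" by (simp add: p_def)
    moreover have "0 < c"
      using inner_A_pos[OF \<open>v \<in> D\<close> \<open>v \<noteq> 0\<close>] \<open>v \<noteq> 0\<close> by (simp add: c_def a_def)
    ultimately have "inner (A a) v = c * inner a v"
      using A_scaleR(2)[OF \<open>v \<in> D\<close>, of c] by (simp add: a_def)
    then show ?thesis
      using \<open>0 < c\<close> inner_A_pos[OF \<open>v \<in> D\<close> \<open>v \<noteq> 0\<close>] True by (simp add: a_def)
  next
    case False
    then show ?thesis
      using inner_A_square_nonneg[OF \<open>v \<in> D\<close>] \<open>a \<in> D\<close> by (simp add: a_def add_nonneg_pos)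
  qed
  with formula \<open>v \<noteq> 0\<close> show ?thesis by simp
qed

lemma height_deriv_strict_mono:
  assumes "0 < s" and "s < t"
  shows "height_deriv s < height_deriv t"
proof (rule DERIV_pos_imp_increasing[OF assms(2)])
  fix x assume "s \<le> x" "x \<le> t"
  with assms have "0 < x" by simp
  then show "\<exists>y. (height_deriv has_real_derivative y) (at x) \<and> 0 < y"
    using height_deriv_has_real_derivative height_deriv2_pos by blast
qed

lemma deriv_height: "0 < t \<Longrightarrow> deriv height t = height_deriv t"
  by (rule DERIV_imp_deriv[OF height_has_real_derivative])

lemma deriv_height_has_real_derivative:
  assumes "0 < t"
  shows "(deriv height has_real_derivative height_deriv2 t) (at t)"
  by (rule has_field_derivative_transform_within_open[OF height_deriv_has_real_derivative[OF assms],
        of "{0<..}"]) (use assms deriv_height in auto)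

lemma deriv2_height: "0 < t \<Longrightarrow> deriv (deriv height) t = height_deriv2 t"
  by (rule DERIV_imp_deriv[OF deriv_height_has_real_derivative])

lemma right_quotient_height_tendsto:
  "((\<lambda>s. ereal ((height s - height 0) / s)) \<longlongrightarrow> (INF t\<in>{0<..}. ereal (deriv height t))) (at_right 0)"
proof -
  have "(INF t\<in>{0<..}. ereal (deriv height t)) = (INF t\<in>{0<..}. ereal (height_deriv t))"
    by (rule INF_cong) (simp_all add: deriv_height)
  then show ?thesis
    using right_quotient_tendsto_INF_deriv[OF continuous_on_height height_has_real_derivative
        height_deriv_strict_mono] by simp
qed

lemma INF_deriv_height_le_m:
  "(INF t\<in>{0<..}. ereal (deriv height t)) \<le> ereal (- m_of A D * norm u0)"
proof (rule tendsto_le[OF trivial_limit_at_right_real _ tendsto_const])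
  show "((\<lambda>t. ereal (- m_of A D * height t)) \<longlongrightarrow> ereal (- m_of A D * norm u0)) (at_right 0)"
    unfolding lim_ereal height_def by (intro tendsto_intros T_tendsto_right)
  show "\<forall>\<^sub>F t in at_right 0. (INF t\<in>{0<..}. ereal (deriv height t)) \<le> ereal (- m_of A D * height t)"
  proof (rule eventually_mono[OF eventually_at_right_less])
    fix t :: real assume "0 < t"
    then have "(INF t\<in>{0<..}. ereal (deriv height t)) \<le> ereal (deriv height t)"
      by (intro INF_lower) simp
    also have "\<dots> \<le> ereal (- m_of A D * height t)"
      using height_deriv_le_m[OF \<open>0 < t\<close>] deriv_height[OF \<open>0 < t\<close>] by simp
    finally show "(INF t\<in>{0<..}. ereal (deriv height t)) \<le> ereal (- m_of A D * height t)" .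
  qed
qed

lemma height_has_real_derivative_within:
  assumes "u0 \<in> D" and "0 \<le> t"
  shows "(height has_real_derivative - inner (T t u0) (T t (A u0)) / height t) (at t within {0..})"
  using has_vector_derivative_norm[OF T_has_vector_derivative_within[OF assms] T_u0_nonzero[OF assms(2)]]
  by (simp add: height_def[abs_def])

lemma right_quotient_height_tendsto_in_domain:
  assumes "u0 \<in> D"
  shows "((\<lambda>s. (height s - height 0) / s) \<longlongrightarrow> - inner (A u0) u0 / norm u0) (at_right 0)"
  using height_has_real_derivative_within[OF assms order_refl]
  by (simp add: has_field_derivative_iff at_within_Ici_at_right height_def inner_commute)

lemma C1_on_height:
  assumes "u0 \<in> D"
  shows "C1_on {0..} height"
proof -
  have "continuous_on {0..} (\<lambda>t. - inner (T t u0) (T t (A u0)) / height t)"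
  proof (rule continuous_on_divide)
    show "continuous_on {0..} (\<lambda>t. - inner (T t u0) (T t (A u0)))"
      by (intro continuous_on_minus continuous_on_inner continuous_on_T)
    show "\<forall>t\<in>{0..}. height t \<noteq> 0"
      using height_pos by (metis atLeast_iff less_irrefl)
  qed (rule continuous_on_height)
  with height_has_real_derivative_within[OF assms] show ?thesis
    unfolding C1_on_def by (intro exI[of _ "\<lambda>t. - inner (T t u0) (T t (A u0)) / height t"]) simp
qed

lemma Cinf_on_height: "Cinf_on {0<..} height"
proof (rule Cinf_on_if_derivatives_in[where P = "gram_polynomial gram" and g = "\<lambda>t. gram 0 0 t powr (1/2)"])
  show "gram 0 0 t powr (1/2) = height t" if "t \<in> {0<..}" for t
    using gram_0_0_pos[of t] that
    by (simp add: powr_half_sqrt gram_def height_def norm_eq_sqrt_inner)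
next
  show "gram_polynomial gram (\<lambda>t. gram 0 0 t powr (1/2))" by (rule gram_polynomial.powr)
next
  fix g assume "gram_polynomial gram g"
  have "\<exists>g'. gram_polynomial gram g' \<and> (\<forall>t\<in>{0<..}. (g has_real_derivative g' t) (at t))"
    by (rule gram_polynomial_has_derivative)
      (use gram_has_real_derivative gram_0_0_pos \<open>gram_polynomial gram g\<close> in auto)
  then show "\<exists>g'. gram_polynomial gram g' \<and>
      (\<forall>t\<in>{0<..}. (g has_real_derivative g' t) (at t within {0<..}))"
    by (auto intro: has_field_derivative_at_within)
qed

end

theorem proposition3p1:
  fixes T :: "real \<Rightarrow> 'a::complex_hilbert \<Rightarrow> 'a"
    and A :: "'a \<Rightarrow> 'a" and D :: "'a set" and u0 :: 'a
  assumes "C0_semigroup T"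
    and "neg_generator T A D"
    and "uniformly_bounded_sg T"
    and "holomorphic_sg T"
    and "num_range A D \<subseteq> {z. Re z > 0}"
    and "num_range (A \<circ> A) (dom_sq A D) \<subseteq> {z. Re z \<ge> 0}"
    and "u0 \<noteq> 0"
  defines "h \<equiv> (\<lambda>t. norm (T t u0))"
  shows "strict_convex_on {0..} h
    \<and> strict_antimono_on {0..} h
    \<and> (\<forall>t>0. (h has_real_derivative deriv h t) (at t)
          \<and> (deriv h has_real_derivative deriv (deriv h) t) (at t)
          \<and> deriv (deriv h) t > 0)
    \<and> (\<exists>d::ereal. d \<le> 0
          \<and> ((\<lambda>s. ereal ((h s - h 0) / s)) \<longlongrightarrow> d) (at_right 0)
          \<and> d = (INF t\<in>{0<..}. ereal (deriv h t))
          \<and> (norm u0 = 1 \<longrightarrow> d \<le> ereal (- m_of A D))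
          \<and> (u0 \<in> D \<and> norm u0 = 1 \<longrightarrow> d = ereal (- Re (cinner (A u0) u0))))
    \<and> (u0 \<in> D \<and> norm u0 = 1 \<longrightarrow> C1_on {0..} h \<and> Cinf_on {0<..} h)"
proof -
  obtain \<delta> F where "0 < \<delta>" "\<And>t. 0 < t \<Longrightarrow> F (complex_of_real t) = T t"
    "\<And>z. z \<in> sector \<delta> \<Longrightarrow> bounded_clinear (F z)" "op_holomorphic_on F (sector \<delta>)"
    using \<open>holomorphic_sg T\<close> unfolding holomorphic_sg_def by blast
  then interpret height_function T A D F \<delta> u0
    using assms(1,2,5-7) by unfold_locales
  have h: "h = height" by (simp add: h_def height_def[abs_def])
  define d where "d = (INF t\<in>{0<..}. ereal (deriv height t))"
  have "d \<le> ereal (deriv height 1)" unfolding d_def by (intro INF_lower) simp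
  also have "\<dots> < 0" using deriv_height[of 1] height_deriv_neg[of 1] by simp
  finally have "d \<le> 0" by simp
  moreover have "u0 \<in> D \<longrightarrow> d = ereal (- inner (A u0) u0 / norm u0)"
    using right_quotient_height_tendsto_in_domain[unfolded lim_ereal[symmetric]]
      right_quotient_height_tendsto[folded d_def] by (auto intro: tendsto_unique[rotated])
  moreover have "norm u0 = 1 \<longrightarrow> d \<le> ereal (- m_of A D)"
    using INF_deriv_height_le_m unfolding d_def by auto
  ultimately show ?thesis
    unfolding h
    using strict_convex_on_if_deriv_strict_mono[OF continuous_on_height height_has_real_derivative
        height_deriv_strict_mono]
      strict_antimono_on_if_deriv_neg[OF continuous_on_height height_has_real_derivative
        height_deriv_neg]
      height_has_real_derivative deriv_height deriv_height_has_real_derivative deriv2_height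
      height_deriv2_pos right_quotient_height_tendsto[folded d_def] C1_on_height Cinf_on_height
    by (auto simp: d_def)
qed

end
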